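(* Let $\mathcal{H}$ be a supersolvable arrangement of rank $n\ge3$ with decomposition $\mathcal{H}=\mathcal{H}_0\sqcup\mathcal{H}_1$ as in the definition of supersolvability. Then the graph of regions $G(\mathcal{H})$ is isomorphic to a graph that is $\ell$-suspended over $G(\mathcal{H}_0)$, where $\ell:=|\mathcal{H}_1|$.
   Context: A hyperplane arrangement is a finite set of linear hyperplanes in $\mathbb{R}^d$; its rank is the dimension of the span of the normals; its regions are the connected components of the complement of the union of the hyperplanes, and its graph of regions $G(\mathcal{H})$ has the regions as vertices, two adjacent iff separated by exactly one hyperplane. An arrangement of rank $n$ is supersolvable if $n\le 2$, or $n\ge 3$ and $\mathcal{H}=\mathcal{H}_0\sqcup\mathcal{H}_1$ with both parts nonempty, $\mathcal{H}_0$ supersolvable of rank $n-1$, and for any distinct $H',H''\in\mathcal{H}_1$ some $H\in\mathcal{H}_0$ satisfies $H'\cap H''\subseteq H$. For a graph $H=(V,E)$ and an integer $\ell\ge1$, let $P_\ell$ be the path on $0,1,\dots,\ell$ and $H\times P_\ell$ the Cartesian product (vertex set $V\times\{0,\dots,\ell\}$, with $(x,i)\sim(y,j)$ iff ($\{x,y\}\in E$ and $i=j$) or ($x=y$ and $|i-j|=1$)). A graph $G$ is $\ell$-suspended over $H$ if $G$ is a spanning subgraph of $H\times P_\ell$ that contains all edges $\{(x,i),(x,i+1)\}$ ($x\in V$, $0\le i<\ell$) and all edges $\{(x,0),(y,0)\}$ and $\{(x,\ell),(y,\ell)\}$ for $\{x,y\}\in E$. *)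

theory Defs
  imports "HOL-Analysis.Analysis"
begin

definition linear_hyperplane :: "'a::euclidean_space set \<Rightarrow> bool" where
  "linear_hyperplane H \<longleftrightarrow> (\<exists>a. a \<noteq> 0 \<and> H = {x. a \<bullet> x = 0})"

definition arrangement :: "'a::euclidean_space set set \<Rightarrow> bool" where
  "arrangement A \<longleftrightarrow> finite A \<and> (\<forall>H\<in>A. linear_hyperplane H)"

definition normals :: "'a::euclidean_space set set \<Rightarrow> 'a set" where
  "normals A = {a. a \<noteq> 0 \<and> (\<exists>H\<in>A. H = {x. a \<bullet> x = 0})}"

definition arr_rank :: "'a::euclidean_space set set \<Rightarrow> nat" where
  "arr_rank A = dim (span (normals A))"

definition regions :: "'a::euclidean_space set set \<Rightarrow> 'a set set" where
  "regions A = components (UNIV - \<Union>A)"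

definition separates :: "'a::euclidean_space set \<Rightarrow> 'a set \<Rightarrow> 'a set \<Rightarrow> bool" where
  "separates H R R' \<longleftrightarrow> (\<exists>a. a \<noteq> 0 \<and> H = {x. a \<bullet> x = 0} \<and>
      (\<forall>x\<in>R. 0 < a \<bullet> x) \<and> (\<forall>x\<in>R'. a \<bullet> x < 0))"

inductive supersolvable :: "'a::euclidean_space set set \<Rightarrow> bool" where
  rank_le2: "arrangement A \<Longrightarrow> arr_rank A \<le> 2 \<Longrightarrow> supersolvable A"
| step: "arrangement A \<Longrightarrow> arr_rank A \<ge> 3 \<Longrightarrow> A = A0 \<union> A1 \<Longrightarrow> A0 \<inter> A1 = {} \<Longrightarrow>
         A0 \<noteq> {} \<Longrightarrow> A1 \<noteq> {} \<Longrightarrow> supersolvable A0 \<Longrightarrow> arr_rank A0 = arr_rank A - 1 \<Longrightarrow>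
         (\<forall>H1\<in>A1. \<forall>H2\<in>A1. H1 \<noteq> H2 \<longrightarrow> (\<exists>H\<in>A0. H1 \<inter> H2 \<subseteq> H)) \<Longrightarrow>
         supersolvable A"

type_synonym 'v graph = "'v set \<times> 'v set set"

definition region_graph :: "'a::euclidean_space set set \<Rightarrow> 'a set graph" where
  "region_graph A = (regions A,
     {{R, R'} | R R'. R \<in> regions A \<and> R' \<in> regions A \<and> R \<noteq> R' \<and>
        card {H\<in>A. separates H R R' \<or> separates H R' R} = 1})"

definition graph_iso :: "'v graph \<Rightarrow> 'w graph \<Rightarrow> bool" where
  "graph_iso G G' \<longleftrightarrow> (\<exists>f. bij_betw f (fst G) (fst G') \<and>
     (\<forall>x\<in>fst G. \<forall>y\<in>fst G. {x, y} \<in> snd G \<longleftrightarrow> {f x, f y} \<in> snd G'))"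

definition path_product :: "'v graph \<Rightarrow> nat \<Rightarrow> ('v \<times> nat) graph" where
  "path_product G l = (fst G \<times> {0..l},
     {{(x, i), (y, j)} | x y i j. x \<in> fst G \<and> y \<in> fst G \<and> i \<le> l \<and> j \<le> l \<and>
        (({x, y} \<in> snd G \<and> i = j) \<or> (x = y \<and> (j = i + 1 \<or> i = j + 1)))})"

definition suspended :: "('v \<times> nat) graph \<Rightarrow> nat \<Rightarrow> 'v graph \<Rightarrow> bool" where
  "suspended G l H \<longleftrightarrow>
     fst G = fst (path_product H l) \<and> snd G \<subseteq> snd (path_product H l) \<and>
     (\<forall>x\<in>fst H. \<forall>i<l. {(x, i), (x, i + 1)} \<in> snd G) \<and>
     (\<forall>x\<in>fst H. \<forall>y\<in>fst H. {x, y} \<in> snd H \<longrightarrow>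
        {(x, 0), (y, 0)} \<in> snd G \<and> {(x, l), (y, l)} \<in> snd G)"

end

theory Submission
  imports Defs
begin

text \<open>Choose normals for the hyperplanes and a vector v orthogonal to all normals of A0 but
to none of A1; it exists because the rank drops, so that by modularity no normal of A1 lies in
the span of the normals of A0. Orient the normals of A1 towards v. On every line x + t v the
hyperplanes of A0 keep their sign, while those of A1 are crossed one at a time and at pairwise
distinct times, since two of them meet only inside A0. Label a region of A by the region of A0
containing it and by the number of hyperplanes of A1 lying below it. Modularity makes the sets of
hyperplanes of A1 below the regions inside one region of A0 a chain, so the labelling is
injective; moving along the lines shows that its image is the product of the regions of A0 with
{0..|A1|}, that consecutive levels are adjacent, and that adjacency on the bottom and top levels is
that of A0.\<close>

lemma in_span_if_hyperplanes_Int_subset: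
  fixes a :: "'a::euclidean_space"
  assumes "(\<Inter>b\<in>B. {x. b \<bullet> x = 0}) \<subseteq> {x. a \<bullet> x = 0}"
  shows "a \<in> span B"
proof -
  have "a \<in> (span B)\<^sup>\<bottom>\<^sup>\<bottom>"
    unfolding orthogonal_comp_def orthogonal_def
  proof (intro CollectI ballI)
    fix x assume "x \<in> {x. \<forall>y\<in>span B. y \<bullet> x = 0}"
    then have "x \<in> (\<Inter>b\<in>B. {x. b \<bullet> x = 0})" using span_base by blast
    then show "x \<bullet> a = 0" using assms by (auto simp: inner_commute)
  qed
  then show ?thesis by (simp add: orthogonal_comp_self)
qed

lemma hyperplane_subset_imp_normal_multiple:
  fixes a b :: "'a::euclidean_space"
  assumes "{x. a \<bullet> x = 0} \<subseteq> {x. b \<bullet> x = 0}"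
  shows "\<exists>c. b = c *\<^sub>R a"
proof -
  have "b \<in> span {a}" by (rule in_span_if_hyperplanes_Int_subset) (use assms in auto)
  then show ?thesis by (auto simp: span_singleton)
qed

lemma exists_orthogonal_avoiding:
  fixes g :: "'b \<Rightarrow> 'a::euclidean_space"
  assumes "finite F" and "\<forall>H\<in>F. \<exists>w. (\<forall>b\<in>N. b \<bullet> w = 0) \<and> g H \<bullet> w \<noteq> 0"
  shows "\<exists>v. (\<forall>b\<in>N. b \<bullet> v = 0) \<and> (\<forall>H\<in>F. g H \<bullet> v \<noteq> 0)"
  using assms
proof (induction F rule: finite_induct)
  case empty
  show ?case by (intro exI[of _ 0]) simp
next
  case (insert H F)
  obtain v where v: "\<forall>b\<in>N. b \<bullet> v = 0" "\<forall>H'\<in>F. g H' \<bullet> v \<noteq> 0"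
    using insert by blast
  obtain w where w: "\<forall>b\<in>N. b \<bullet> w = 0" "g H \<bullet> w \<noteq> 0"
    using insert.prems by blast
  \<comment> \<open>only finitely many values of e make v + e w orthogonal to some g H\<close>
  have "finite ((\<lambda>H'. - (g H' \<bullet> v) / (g H' \<bullet> w)) ` insert H F)"
    using insert.hyps(1) by simp
  then obtain e :: real where e: "e \<notin> (\<lambda>H'. - (g H' \<bullet> v) / (g H' \<bullet> w)) ` insert H F"
    using ex_new_if_finite[OF infinite_UNIV_char_0] by blast
  have "g H' \<bullet> (v + e *\<^sub>R w) \<noteq> 0" if "H' \<in> insert H F" for H'
  proof (cases "g H' \<bullet> w = 0")
    case True
    then show ?thesis using that v w by (auto simp: inner_add_right)
  next
    case False
    have "e \<noteq> - (g H' \<bullet> v) / (g H' \<bullet> w)" using that e by blast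
    then have "g H' \<bullet> v + e * (g H' \<bullet> w) \<noteq> 0" using False by (simp add: field_simps)
    then show ?thesis by (simp add: inner_add_right)
  qed
  moreover have "\<forall>b\<in>N. b \<bullet> (v + e *\<^sub>R w) = 0" using v w by (simp add: inner_add_right)
  ultimately show ?case by blast
qed

lemma exists_cut_with_card_below:
  fixes T :: "'a::linordered_field set"
  assumes "finite T" and "\<forall>s\<in>T. s < b" and "i \<le> card T"
  shows "\<exists>t<b. t \<notin> T \<and> card {s\<in>T. s < t} = i"
  using assms
proof (induction T arbitrary: b i rule: finite_linorder_max_induct)
  case empty
  then show ?case by (intro exI[of _ "b - 1"]) auto
next
  case (insert m T)
  then have m: "m \<notin> T" "m < b" by auto
  show ?case
  proof (cases "i = card (insert m T)")
    case True
    define t where "t = (m + b) / 2"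
    have "m < t" "t < b" using m(2) by (simp_all add: t_def field_simps)
    then have "{s \<in> insert m T. s < t} = insert m T" "t \<notin> insert m T"
      using insert.hyps(2) by auto
    then show ?thesis using True \<open>t < b\<close> by auto
  next
    case False
    then have "i \<le> card T" using insert.prems(2) insert.hyps(1) m(1) by simp
    then obtain t where t: "t < m" "t \<notin> T" "card {s\<in>T. s < t} = i"
      using insert.IH[of m i] insert.hyps(2) by blast
    have "{s \<in> insert m T. s < t} = {s\<in>T. s < t}" using t(1) by auto
    then show ?thesis using t m(2) by (intro exI[of _ t]) auto
  qed
qed

section \<open>Regions as sign cells\<close>

definition orients :: "('a::euclidean_space set \<Rightarrow> 'a) \<Rightarrow> 'a set set \<Rightarrow> bool" where
  "orients n B \<longleftrightarrow> (\<forall>H\<in>B. n H \<noteq> 0 \<and> H = {x. n H \<bullet> x = 0})"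

definition sign_cell :: "('a::euclidean_space set \<Rightarrow> 'a) \<Rightarrow> 'a set set \<Rightarrow> 'a \<Rightarrow> 'a set" where
  "sign_cell n B x = {y. \<forall>H\<in>B. n H \<bullet> y \<noteq> 0 \<and> (0 < n H \<bullet> y \<longleftrightarrow> 0 < n H \<bullet> x)}"

definition separating :: "('a::euclidean_space set \<Rightarrow> 'a) \<Rightarrow> 'a set set \<Rightarrow> 'a \<Rightarrow> 'a \<Rightarrow> 'a set set" where
  "separating n B x y = {H\<in>B. (0 < n H \<bullet> x) \<noteq> (0 < n H \<bullet> y)}"

lemma arrangement_orients: "arrangement A \<Longrightarrow> \<exists>n. orients n A"
  unfolding arrangement_def linear_hyperplane_def orients_def by (rule bchoice) blast

lemma orients_subset: "orients n B \<Longrightarrow> C \<subseteq> B \<Longrightarrow> orients n C"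
  unfolding orients_def by blast

lemma orients_hyperplane_eq: "orients n B \<Longrightarrow> H \<in> B \<Longrightarrow> H = {x. n H \<bullet> x = 0}"
  unfolding orients_def by blast

lemma orients_normal_nonzero: "orients n B \<Longrightarrow> H \<in> B \<Longrightarrow> n H \<noteq> 0"
  unfolding orients_def by blast

lemma orients_mem_iff: "orients n B \<Longrightarrow> H \<in> B \<Longrightarrow> z \<in> H \<longleftrightarrow> n H \<bullet> z = 0"
  unfolding orients_def by blast

lemma orients_notin_Union_iff: "orients n B \<Longrightarrow> x \<notin> \<Union>B \<longleftrightarrow> (\<forall>H\<in>B. n H \<bullet> x \<noteq> 0)"
  unfolding orients_def by blast

lemma orients_normal_in_normals: "orients n B \<Longrightarrow> H \<in> B \<Longrightarrow> n H \<in> normals B"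
  unfolding orients_def normals_def by blast

lemma orients_eq_if_normal_in_span:
  assumes "orients n B" "H \<in> B" "H' \<in> B" "n H \<in> span {n H'}"
  shows "H = H'"
proof -
  obtain c where c: "n H = c *\<^sub>R n H'" using assms(4) by (auto simp: span_singleton)
  then have "c \<noteq> 0" using assms(1,2) unfolding orients_def by auto
  then have "{x. n H \<bullet> x = 0} = {x. n H' \<bullet> x = 0}" using c by simp
  then show ?thesis using assms(1-3) unfolding orients_def by metis
qed

lemma normals_subset_span:
  assumes "orients n B" and "\<And>H. H \<in> B \<Longrightarrow> n H \<in> span S"
  shows "normals B \<subseteq> span S"
proof
  fix a assume "a \<in> normals B"
  then obtain H where H: "H \<in> B" "H = {x. a \<bullet> x = 0}" unfolding normals_def by blast
  have "{x. n H \<bullet> x = 0} = {x. a \<bullet> x = 0}"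
    using orients_hyperplane_eq[OF assms(1) H(1)] H(2) by (rule trans[OF sym])
  then have "{x. n H \<bullet> x = 0} \<subseteq> {x. a \<bullet> x = 0}" by (rule equalityD1)
  then obtain c where "a = c *\<^sub>R n H" using hyperplane_subset_imp_normal_multiple by blast
  then show "a \<in> span S" using assms(2)[OF H(1)] by (simp add: span_mul)
qed

lemma sign_cell_self: "orients n B \<Longrightarrow> x \<notin> \<Union>B \<Longrightarrow> x \<in> sign_cell n B x"
  unfolding sign_cell_def orients_def by blast

lemma sign_cell_subset: "orients n B \<Longrightarrow> sign_cell n B x \<subseteq> - \<Union>B"
  unfolding sign_cell_def orients_def by blast

lemma sign_cell_eq_iff:
  assumes "orients n B" "x \<notin> \<Union>B" "y \<notin> \<Union>B"
  shows "sign_cell n B x = sign_cell n B y \<longleftrightarrow> separating n B x y = {}"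
proof
  assume "sign_cell n B x = sign_cell n B y"
  then have "x \<in> sign_cell n B y" using sign_cell_self assms by metis
  then show "separating n B x y = {}" unfolding sign_cell_def separating_def by blast
qed (auto simp: sign_cell_def separating_def)

lemma sign_cell_eq_if_mem: "y \<in> sign_cell n B x \<Longrightarrow> sign_cell n B y = sign_cell n B x"
  unfolding sign_cell_def by auto

lemma convex_sign_cell: "convex (sign_cell n B x)"
proof -
  have "n H \<bullet> y \<noteq> 0 \<and> (0 < n H \<bullet> y \<longleftrightarrow> 0 < n H \<bullet> x) \<longleftrightarrow>
      (if 0 < n H \<bullet> x then 0 < n H \<bullet> y else n H \<bullet> y < 0)" for H y
    by auto
  then have "sign_cell n B x =
      (\<Inter>H\<in>B. {y. if 0 < n H \<bullet> x then 0 < n H \<bullet> y else n H \<bullet> y < 0})"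
    unfolding sign_cell_def by auto
  moreover have "convex {y. if 0 < n H \<bullet> x then 0 < n H \<bullet> y else n H \<bullet> y < 0}" for H
    by (cases "0 < n H \<bullet> x") (simp_all add: convex_halfspace_gt convex_halfspace_lt)
  ultimately show ?thesis by (simp add: convex_INT)
qed

lemma connected_component_eq_sign_cell:
  assumes n: "orients n B" and x: "x \<notin> \<Union>B"
  shows "connected_component_set (- \<Union>B) x = sign_cell n B x"
proof
  show "sign_cell n B x \<subseteq> connected_component_set (- \<Union>B) x"
    by (intro connected_component_maximal convex_connected convex_sign_cell sign_cell_self
        sign_cell_subset n x)
next
  let ?C = "connected_component_set (- \<Union>B) x"
  have C: "connected ?C" "x \<in> ?C" "?C \<subseteq> - \<Union>B"
    using x by (auto simp: connected_component_subset)
  show "?C \<subseteq> sign_cell n B x"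
  proof
    fix y assume y: "y \<in> ?C"
    have "0 < n H \<bullet> y \<longleftrightarrow> 0 < n H \<bullet> x" if H: "H \<in> B" for H
    proof (rule ccontr)
      assume "\<not> ?thesis"
      then have "\<exists>z\<in>?C. n H \<bullet> z = 0"
        using connected_ivt_hyperplane[OF C(1,2) y, of "n H" 0]
          connected_ivt_hyperplane[OF C(1) y C(2), of "n H" 0]
        by (cases "0 < n H \<bullet> x") auto
      then show False using C(3) H n orients_mem_iff by blast
    qed
    moreover have "y \<notin> \<Union>B" using y C(3) by blast
    ultimately show "y \<in> sign_cell n B x"
      using orients_notin_Union_iff[OF n] unfolding sign_cell_def by blast
  qed
qed

lemma regions_eq_sign_cells: "orients n B \<Longrightarrow> regions B = sign_cell n B ` (- \<Union>B)"
  unfolding regions_def components_def Compl_eq_Diff_UNIV[symmetric]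
  by (intro image_cong) (auto simp: connected_component_eq_sign_cell)

lemma separates_imp_sign_change:
  fixes b :: "'a::euclidean_space"
  assumes "separates H R R'" "H = {z. b \<bullet> z = 0}" "x \<in> R" "y \<in> R'"
  shows "(0 < b \<bullet> x) \<noteq> (0 < b \<bullet> y)"
proof -
  obtain a where a: "H = {z. a \<bullet> z = 0}" "0 < a \<bullet> x" "a \<bullet> y < 0"
    using assms(1,3,4) unfolding separates_def by blast
  have "{z. b \<bullet> z = 0} \<subseteq> {z. a \<bullet> z = 0}" using a(1) assms(2) by blast
  then obtain c where "a = c *\<^sub>R b" using hyperplane_subset_imp_normal_multiple by blast
  then show ?thesis using a(2,3) by (auto simp: zero_less_mult_iff mult_less_0_iff)
qed

lemma separates_sign_cell_iff:
  assumes n: "orients n B" and H: "H \<in> B" and x: "x \<notin> \<Union>B" and y: "y \<notin> \<Union>B"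
  shows "separates H (sign_cell n B x) (sign_cell n B y) \<or> separates H (sign_cell n B y) (sign_cell n B x)
     \<longleftrightarrow> H \<in> separating n B x y"
proof
  have H_eq: "H = {z. n H \<bullet> z = 0}" using n H by (rule orients_hyperplane_eq)
  show "H \<in> separating n B x y" if "separates H (sign_cell n B x) (sign_cell n B y) \<or>
      separates H (sign_cell n B y) (sign_cell n B x)"
    using that separates_imp_sign_change[OF _ H_eq] sign_cell_self[OF n x] sign_cell_self[OF n y] H
    unfolding separating_def by blast
  have "separates H (sign_cell n B p) (sign_cell n B q)" if "0 < n H \<bullet> p" "\<not> 0 < n H \<bullet> q" for p q
    unfolding separates_def
  proof (intro exI[of _ "n H"] conjI ballI)
    show "n H \<noteq> 0" using n H by (rule orients_normal_nonzero)
    show "H = {x. n H \<bullet> x = 0}" by (fact H_eq)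
    show "0 < n H \<bullet> z" if "z \<in> sign_cell n B p" for z
      using that H \<open>0 < n H \<bullet> p\<close> unfolding sign_cell_def by blast
    show "n H \<bullet> z < 0" if "z \<in> sign_cell n B q" for z
      using that H \<open>\<not> 0 < n H \<bullet> q\<close> unfolding sign_cell_def by force
  qed
  then show "separates H (sign_cell n B x) (sign_cell n B y) \<or> separates H (sign_cell n B y) (sign_cell n B x)"
    if "H \<in> separating n B x y"
    using that unfolding separating_def by (cases "0 < n H \<bullet> x") auto
qed

lemma region_graph_edge_iff:
  assumes n: "orients n B" and x: "x \<notin> \<Union>B" and y: "y \<notin> \<Union>B"
  shows "{sign_cell n B x, sign_cell n B y} \<in> snd (region_graph B) \<longleftrightarrow> card (separating n B x y) = 1"
proof -
  have sep: "{H\<in>B. separates H (sign_cell n B x) (sign_cell n B y) \<or>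
      separates H (sign_cell n B y) (sign_cell n B x)} = separating n B x y"
    using separates_sign_cell_iff[OF n _ x y] unfolding separating_def by blast
  have "x \<in> - \<Union>B" "y \<in> - \<Union>B" using x y by auto
  then have regions: "sign_cell n B x \<in> regions B" "sign_cell n B y \<in> regions B"
    using regions_eq_sign_cells[OF n] by auto
  show ?thesis
  proof
    assume "{sign_cell n B x, sign_cell n B y} \<in> snd (region_graph B)"
    then obtain R R' where "{sign_cell n B x, sign_cell n B y} = {R, R'}"
      "card {H\<in>B. separates H R R' \<or> separates H R' R} = 1"
      unfolding region_graph_def by auto
    then show "card (separating n B x y) = 1"
      using sep by (auto simp: doubleton_eq_iff conj_disj_distribR disj_commute)
  next
    assume card: "card (separating n B x y) = 1"
    then have "sign_cell n B x \<noteq> sign_cell n B y" using sign_cell_eq_iff[OF n x y] by auto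
    moreover have "card {H\<in>B. separates H (sign_cell n B x) (sign_cell n B y) \<or>
        separates H (sign_cell n B y) (sign_cell n B x)} = 1"
      using card sep by simp
    ultimately show "{sign_cell n B x, sign_cell n B y} \<in> snd (region_graph B)"
      using regions unfolding region_graph_def snd_conv by blast
  qed
qed

lemma region_graph_edge_subset: "e \<in> snd (region_graph B) \<Longrightarrow> e \<subseteq> regions B"
  unfolding region_graph_def by auto

lemma path_product_edgeI:
  assumes "x \<in> fst G" "y \<in> fst G" "i \<le> l" "j \<le> l"
    and "({x, y} \<in> snd G \<and> i = j) \<or> (x = y \<and> (j = i + 1 \<or> i = j + 1))"
  shows "{(x, i), (y, j)} \<in> snd (path_product G l)"
  unfolding path_product_def snd_conv mem_Collect_eq
  by (intro exI[of _ x] exI[of _ y] exI[of _ i] exI[of _ j]) (use assms in auto)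

lemma graph_iso_image:
  assumes inj: "inj_on f (fst G)" and edges: "\<forall>e\<in>snd G. e \<subseteq> fst G"
  shows "graph_iso G (f ` fst G, (`) f ` snd G)"
  unfolding graph_iso_def
proof (intro exI conjI ballI)
  show "bij_betw f (fst G) (fst (f ` fst G, (`) f ` snd G))" using inj by (simp add: bij_betw_def)
  fix x y assume xy: "x \<in> fst G" "y \<in> fst G"
  have pair: "f ` {x, y} = {f x, f y}" by simp
  show "{x, y} \<in> snd G \<longleftrightarrow> {f x, f y} \<in> snd (f ` fst G, (`) f ` snd G)"
  proof
    assume "{x, y} \<in> snd G"
    then show "{f x, f y} \<in> snd (f ` fst G, (`) f ` snd G)" using pair by (metis imageI snd_conv)
  next
    assume "{f x, f y} \<in> snd (f ` fst G, (`) f ` snd G)"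
    then obtain e where e: "e \<in> snd G" "f ` {x, y} = f ` e" unfolding pair[symmetric] by auto
    then have "{x, y} = e" using inj_on_image_eq_iff[OF inj, of "{x, y}" e] xy edges by blast
    then show "{x, y} \<in> snd G" using e(1) by simp
  qed
qed

section \<open>Lines in a transversal direction\<close>

locale transversal_split =
  fixes A A0 A1 :: "'a::euclidean_space set set" and n :: "'a set \<Rightarrow> 'a" and v :: 'a
  assumes finite_A: "finite A"
    and A_eq: "A = A0 \<union> A1" and disjoint: "A0 \<inter> A1 = {}"
    and orients: "orients n A"
    and v_A0: "\<And>H. H \<in> A0 \<Longrightarrow> n H \<bullet> v = 0"
    and v_A1: "\<And>H. H \<in> A1 \<Longrightarrow> 0 < n H \<bullet> v"
    and modular: "\<And>H1 H2. H1 \<in> A1 \<Longrightarrow> H2 \<in> A1 \<Longrightarrow> H1 \<noteq> H2 \<Longrightarrow> \<exists>H\<in>A0. H1 \<inter> H2 \<subseteq> H"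
begin

lemma orients_A0: "orients n A0"
  using orients A_eq orients_subset by blast

lemma orients_A1: "orients n A1"
  using orients A_eq orients_subset by blast

lemma finite_A1: "finite A1"
  using finite_A A_eq by simp

lemma notin_Union_A_iff: "x \<notin> \<Union>A \<longleftrightarrow> x \<notin> \<Union>A0 \<and> x \<notin> \<Union>A1"
  using A_eq by blast

text \<open>Since every normal of A1 points in direction v, the hyperplanes in below x are those
crossed by the line x + t v for t < 0, and crossing x H is the time at which it crosses H.\<close>

definition below :: "'a \<Rightarrow> 'a set set" where
  "below x = {H\<in>A1. 0 < n H \<bullet> x}"

definition label :: "'a \<Rightarrow> 'a set \<times> nat" where
  "label x = (sign_cell n A0 x, card (below x))"

definition crossing :: "'a \<Rightarrow> 'a set \<Rightarrow> real" where
  "crossing x H = - (n H \<bullet> x) / (n H \<bullet> v)"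

lemma finite_below: "finite (below x)"
  using finite_A1 unfolding below_def by simp

lemma below_subset: "below x \<subseteq> A1"
  unfolding below_def by blast

lemma inner_shift_A0: "H \<in> A0 \<Longrightarrow> n H \<bullet> (x + t *\<^sub>R v) = n H \<bullet> x"
  using v_A0 by (simp add: inner_add_right)

lemma inner_shift_A1: "H \<in> A1 \<Longrightarrow> n H \<bullet> (x + t *\<^sub>R v) = (t - crossing x H) * (n H \<bullet> v)"
  using v_A1[of H] by (simp add: crossing_def inner_add_right field_simps)

lemma sign_cell_A0_shift: "sign_cell n A0 (x + t *\<^sub>R v) = sign_cell n A0 x"
  unfolding sign_cell_def by (simp add: inner_shift_A0)

lemma below_shift: "below (x + t *\<^sub>R v) = {H\<in>A1. crossing x H < t}"
proof -
  have "0 < n H \<bullet> (x + t *\<^sub>R v) \<longleftrightarrow> crossing x H < t" if "H \<in> A1" for H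
    using v_A1[OF that] by (simp add: inner_shift_A1[OF that] zero_less_mult_iff)
  then show ?thesis unfolding below_def by blast
qed

lemma inj_on_crossing:
  assumes x: "x \<notin> \<Union>A0"
  shows "inj_on (crossing x) A1"
proof (rule inj_onI, rule ccontr)
  fix H1 H2 assume H: "H1 \<in> A1" "H2 \<in> A1" "crossing x H1 = crossing x H2" "H1 \<noteq> H2"
  obtain H where H0: "H \<in> A0" "H1 \<inter> H2 \<subseteq> H" using modular H by blast
  have "x + crossing x H1 *\<^sub>R v \<in> H1 \<inter> H2"
    using H inner_shift_A1 orients_mem_iff[OF orients_A1] by simp
  then have "x + crossing x H1 *\<^sub>R v \<in> H" using H0(2) by blast
  then have "n H \<bullet> x = 0"
    using orients_mem_iff[OF orients_A0 H0(1)] inner_shift_A0[OF H0(1)] by simp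
  then show False using x H0(1) orients_notin_Union_iff[OF orients_A0] by blast
qed

lemma shift_notin_Union:
  assumes x: "x \<notin> \<Union>A0" and t: "t \<notin> crossing x ` A1"
  shows "x + t *\<^sub>R v \<notin> \<Union>A"
proof -
  have "n H \<bullet> (x + t *\<^sub>R v) \<noteq> 0" if "H \<in> A" for H
  proof (cases "H \<in> A0")
    case True
    then show ?thesis using x orients_notin_Union_iff[OF orients_A0] inner_shift_A0 by simp
  next
    case False
    then have "H \<in> A1" using that A_eq by blast
    then show ?thesis using t inner_shift_A1 v_A1[of H] by force
  qed
  then show ?thesis using orients_notin_Union_iff[OF orients] by blast
qed

lemma level_exists:
  assumes x: "x \<notin> \<Union>A0" and i: "i \<le> card A1"
  obtains t where "t \<notin> crossing x ` A1" "card (below (x + t *\<^sub>R v)) = i"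
proof -
  let ?T = "crossing x ` A1"
  have fin: "finite ?T" using finite_A1 by simp
  have "\<forall>s\<in>?T. s < Max (insert 0 ?T) + 1"
  proof
    fix s assume "s \<in> ?T"
    then have "s \<le> Max (insert 0 ?T)" using fin by simp
    then show "s < Max (insert 0 ?T) + 1" by linarith
  qed
  moreover have "i \<le> card ?T" using card_image[OF inj_on_crossing[OF x]] i by simp
  ultimately obtain t where t: "t \<notin> ?T" "card {s\<in>?T. s < t} = i"
    using exists_cut_with_card_below[OF fin] by blast
  have "{s\<in>?T. s < t} = crossing x ` below (x + t *\<^sub>R v)"
    by (auto simp: below_shift)
  moreover have "inj_on (crossing x) (below (x + t *\<^sub>R v))"
    using inj_on_crossing[OF x] below_subset by (rule inj_on_subset)
  ultimately have "card (below (x + t *\<^sub>R v)) = i" using t(2) card_image by metis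
  with t(1) show ?thesis by (rule that)
qed

lemma below_chain:
  assumes x: "x \<notin> \<Union>A" and y: "y \<notin> \<Union>A" and same: "sign_cell n A0 x = sign_cell n A0 y"
  shows "below x \<subseteq> below y \<or> below y \<subseteq> below x"
proof (rule ccontr)
  assume "\<not> ?thesis"
  then obtain H1 H2 where H1: "H1 \<in> A1" "0 < n H1 \<bullet> x" "\<not> 0 < n H1 \<bullet> y"
    and H2: "H2 \<in> A1" "0 < n H2 \<bullet> y" "\<not> 0 < n H2 \<bullet> x"
    unfolding below_def by blast
  have "n H1 \<bullet> y \<noteq> 0" "n H2 \<bullet> x \<noteq> 0"
    using x y H1(1) H2(1) orients_notin_Union_iff[OF orients] A_eq by auto
  then have H1y: "n H1 \<bullet> y < 0" and H2x: "n H2 \<bullet> x < 0" using H1(3) H2(3) by auto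
  have a1: "0 < n H1 \<bullet> v" and a2: "0 < n H2 \<bullet> v" using v_A1 H1(1) H2(1) by auto
  \<comment> \<open>c is orthogonal to v, positive at x and negative at y\<close>
  define c where "c = (n H2 \<bullet> v) *\<^sub>R n H1 - (n H1 \<bullet> v) *\<^sub>R n H2"
  have c_inner: "c \<bullet> z = (n H2 \<bullet> v) * (n H1 \<bullet> z) - (n H1 \<bullet> v) * (n H2 \<bullet> z)" for z
    unfolding c_def by (simp add: inner_diff_left)
  have "0 < c \<bullet> x"
    using mult_pos_pos[OF a2 H1(2)] mult_pos_neg[OF a1 H2x] unfolding c_inner by linarith
  moreover have "c \<bullet> y < 0"
    using mult_pos_neg[OF a2 H1y] mult_pos_pos[OF a1 H2(2)] unfolding c_inner by linarith
  ultimately obtain z where z: "z \<in> closed_segment x y" "c \<bullet> z = 0"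
    using connected_ivt_hyperplane[OF connected_segment[of x y] ends_in_segment(2) ends_in_segment(1), of c 0]
    by auto
  have x0: "x \<notin> \<Union>A0" and y0: "y \<notin> \<Union>A0" using x y notin_Union_A_iff by auto
  have "closed_segment x y \<subseteq> sign_cell n A0 x"
    using sign_cell_self[OF orients_A0 x0] sign_cell_self[OF orients_A0 y0] same
    by (intro closed_segment_subset convex_sign_cell) auto
  with z(1) have "z \<notin> \<Union>A0" using sign_cell_subset[OF orients_A0] by blast
  moreover have "crossing z H1 = crossing z H2"
    using z(2) a1 a2 unfolding c_inner crossing_def by (simp add: field_simps)
  moreover have "H1 \<noteq> H2" using H1(2) H2(3) by auto
  ultimately show False using inj_on_crossing H1(1) H2(1) by (blast dest: inj_onD)
qed

lemma separating_A_eq: "separating n A x y = separating n A0 x y \<union> separating n A1 x y"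
  unfolding separating_def A_eq by blast

lemma separating_A1_empty_iff: "separating n A1 x y = {} \<longleftrightarrow> below x = below y"
  unfolding separating_def below_def set_eq_iff by blast

lemma below_eq_iff_card:
  assumes "x \<notin> \<Union>A" "y \<notin> \<Union>A" "sign_cell n A0 x = sign_cell n A0 y"
  shows "below x = below y \<longleftrightarrow> card (below x) = card (below y)"
proof
  assume card: "card (below x) = card (below y)"
  from below_chain[OF assms] show "below x = below y"
  proof
    assume "below x \<subseteq> below y"
    then show ?thesis using card_subset_eq[OF finite_below] card by blast
  next
    assume "below y \<subseteq> below x"
    then show ?thesis using card_subset_eq[OF finite_below] card by metis
  qed
qed simp

lemma sign_cell_eq_iff_label:
  assumes x: "x \<notin> \<Union>A" and y: "y \<notin> \<Union>A"
  shows "sign_cell n A x = sign_cell n A y \<longleftrightarrow> label x = label y"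
proof -
  have x0: "x \<notin> \<Union>A0" and y0: "y \<notin> \<Union>A0" using x y notin_Union_A_iff by auto
  have "sign_cell n A x = sign_cell n A y \<longleftrightarrow> separating n A0 x y = {} \<and> below x = below y"
    unfolding sign_cell_eq_iff[OF orients x y] separating_A_eq
    by (simp add: separating_A1_empty_iff)
  also have "\<dots> \<longleftrightarrow> sign_cell n A0 x = sign_cell n A0 y \<and> below x = below y"
    unfolding sign_cell_eq_iff[OF orients_A0 x0 y0] ..
  also have "\<dots> \<longleftrightarrow> sign_cell n A0 x = sign_cell n A0 y \<and> card (below x) = card (below y)"
    using below_eq_iff_card[OF x y] by blast
  finally show ?thesis unfolding label_def by simp
qed

definition region_label :: "'a set \<Rightarrow> 'a set \<times> nat" where
  "region_label R = label (SOME x. x \<in> R)"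

lemma region_label_sign_cell:
  assumes x: "x \<notin> \<Union>A"
  shows "region_label (sign_cell n A x) = label x"
proof -
  let ?r = "SOME z. z \<in> sign_cell n A x"
  have r: "?r \<in> sign_cell n A x" using sign_cell_self[OF orients x] by (rule someI)
  then have "?r \<notin> \<Union>A" using sign_cell_subset[OF orients] by blast
  moreover have "sign_cell n A ?r = sign_cell n A x" using r by (rule sign_cell_eq_if_mem)
  ultimately show ?thesis unfolding region_label_def using sign_cell_eq_iff_label x by blast
qed

lemma inj_on_region_label: "inj_on region_label (regions A)"
proof (rule inj_onI)
  fix R R' assume "R \<in> regions A" "R' \<in> regions A" and eq: "region_label R = region_label R'"
  then obtain x y where xy: "x \<notin> \<Union>A" "y \<notin> \<Union>A" "R = sign_cell n A x" "R' = sign_cell n A y"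
    using regions_eq_sign_cells[OF orients] by auto
  then have "label x = label y" using eq region_label_sign_cell by simp
  then show "R = R'" unfolding xy(3,4) using sign_cell_eq_iff_label[OF xy(1,2)] by blast
qed

lemma region_label_image: "region_label ` regions A = regions A0 \<times> {0..card A1}"
proof
  show "region_label ` regions A \<subseteq> regions A0 \<times> {0..card A1}"
  proof
    fix p assume "p \<in> region_label ` regions A"
    then obtain x where x: "x \<notin> \<Union>A" and "p = region_label (sign_cell n A x)"
      using regions_eq_sign_cells[OF orients] by auto
    then have p: "p = label x" by (simp add: region_label_sign_cell)
    have "x \<in> - \<Union>A0" using x notin_Union_A_iff by simp
    then have "sign_cell n A0 x \<in> regions A0"
      unfolding regions_eq_sign_cells[OF orients_A0] by (rule imageI)
    moreover have "card (below x) \<le> card A1" using card_mono[OF finite_A1 below_subset] .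
    ultimately show "p \<in> regions A0 \<times> {0..card A1}" unfolding p label_def by simp
  qed
next
  show "regions A0 \<times> {0..card A1} \<subseteq> region_label ` regions A"
  proof
    fix p assume "p \<in> regions A0 \<times> {0..card A1}"
    then obtain x i where x: "x \<notin> \<Union>A0" "p = (sign_cell n A0 x, i)" "i \<le> card A1"
      using regions_eq_sign_cells[OF orients_A0] by auto
    obtain t where t: "t \<notin> crossing x ` A1" "card (below (x + t *\<^sub>R v)) = i"
      using level_exists[OF x(1,3)] .
    have y: "x + t *\<^sub>R v \<notin> \<Union>A" using shift_notin_Union[OF x(1) t(1)] .
    have "p = region_label (sign_cell n A (x + t *\<^sub>R v))"
      unfolding region_label_sign_cell[OF y] label_def sign_cell_A0_shift t(2) x(2) ..
    moreover have "sign_cell n A (x + t *\<^sub>R v) \<in> regions A"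
      unfolding regions_eq_sign_cells[OF orients] using y by simp
    ultimately show "p \<in> region_label ` regions A" by blast
  qed
qed

lemma finite_separating: "B \<subseteq> A \<Longrightarrow> finite (separating n B x y)"
  using finite_subset[OF _ finite_A] unfolding separating_def by simp

lemma card_separating_A:
  "card (separating n A x y) = card (separating n A0 x y) + card (separating n A1 x y)"
proof -
  have "separating n A0 x y \<inter> separating n A1 x y = {}"
    using disjoint unfolding separating_def by blast
  then show ?thesis
    unfolding separating_A_eq using A_eq by (simp add: card_Un_disjoint finite_separating)
qed

lemma separating_A0_shift:
  "separating n A0 (x + s *\<^sub>R v) (y + t *\<^sub>R v) = separating n A0 x y"
  unfolding separating_def by (auto simp: inner_shift_A0)

lemma card_below_step:
  assumes "separating n A1 x y = {H}"
  shows "card (below x) = card (below y) + 1 \<or> card (below y) = card (below x) + 1"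
proof -
  have H: "H \<in> A1" "(0 < n H \<bullet> x) \<noteq> (0 < n H \<bullet> y)"
    using assms unfolding separating_def by blast+
  have "(0 < n H' \<bullet> x) = (0 < n H' \<bullet> y)" if "H' \<in> A1" "H' \<noteq> H" for H'
    using assms that unfolding separating_def by blast
  then have "below x = insert H (below y) \<and> H \<notin> below y \<or> below y = insert H (below x) \<and> H \<notin> below x"
    using H unfolding below_def by auto
  then show ?thesis using finite_below by auto
qed

lemma label_edge_in_path_product:
  assumes x: "x \<notin> \<Union>A" and y: "y \<notin> \<Union>A" and card: "card (separating n A x y) = 1"
  shows "{label x, label y} \<in> snd (path_product (region_graph A0) (card A1))"
proof -
  have x0: "x \<notin> \<Union>A0" and y0: "y \<notin> \<Union>A0" using x y notin_Union_A_iff by auto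
  then have regions: "sign_cell n A0 x \<in> fst (region_graph A0)" "sign_cell n A0 y \<in> fst (region_graph A0)"
    unfolding region_graph_def regions_eq_sign_cells[OF orients_A0] by auto
  have levels: "card (below x) \<le> card A1" "card (below y) \<le> card A1"
    using card_mono[OF finite_A1 below_subset] by auto
  \<comment> \<open>the separating hyperplane is in A1 (vertical edge) or in A0 (horizontal edge)\<close>
  consider "card (separating n A0 x y) = 0" "card (separating n A1 x y) = 1"
    | "card (separating n A0 x y) = 1" "card (separating n A1 x y) = 0"
    using card card_separating_A[of x y] by linarith
  then show ?thesis
  proof cases
    case 1
    have "separating n A0 x y = {}"
      using 1(1) finite_separating[of A0] A_eq by simp
    then have "sign_cell n A0 x = sign_cell n A0 y" using sign_cell_eq_iff[OF orients_A0 x0 y0] by simp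
    moreover obtain H where "separating n A1 x y = {H}" using 1(2) card_1_singletonE by blast
    then have "card (below x) = card (below y) + 1 \<or> card (below y) = card (below x) + 1"
      by (rule card_below_step)
    ultimately show ?thesis unfolding label_def using regions levels by (auto intro!: path_product_edgeI)
  next
    case 2
    have "separating n A1 x y = {}"
      using 2(2) finite_separating[of A1] A_eq by simp
    then have "below x = below y" by (simp add: separating_A1_empty_iff)
    moreover have "{sign_cell n A0 x, sign_cell n A0 y} \<in> snd (region_graph A0)"
      using region_graph_edge_iff[OF orients_A0 x0 y0] 2(1) by blast
    ultimately show ?thesis unfolding label_def using regions levels by (auto intro!: path_product_edgeI)
  qed
qed

definition lifted_edges :: "('a set \<times> nat) set set" where
  "lifted_edges = (`) region_label ` snd (region_graph A)"

lemma label_edge_in_lifted_edges: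
  assumes x: "x \<notin> \<Union>A" and y: "y \<notin> \<Union>A" and card: "card (separating n A x y) = 1"
  shows "{label x, label y} \<in> lifted_edges"
proof -
  have "{sign_cell n A x, sign_cell n A y} \<in> snd (region_graph A)"
    using region_graph_edge_iff[OF orients x y] card by blast
  moreover have "region_label ` {sign_cell n A x, sign_cell n A y} = {label x, label y}"
    using region_label_sign_cell x y by simp
  ultimately show ?thesis unfolding lifted_edges_def by (metis imageI)
qed

lemma lifted_edges_subset: "lifted_edges \<subseteq> snd (path_product (region_graph A0) (card A1))"
proof
  fix e assume "e \<in> lifted_edges"
  then obtain R R' where RR: "{R, R'} \<in> snd (region_graph A)" "e = region_label ` {R, R'}"
    unfolding lifted_edges_def region_graph_def by auto
  then have "R \<in> regions A" "R' \<in> regions A" using region_graph_edge_subset by blast+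
  then obtain x y where xy: "x \<notin> \<Union>A" "y \<notin> \<Union>A" "R = sign_cell n A x" "R' = sign_cell n A y"
    using regions_eq_sign_cells[OF orients] by auto
  then have "card (separating n A x y) = 1" using region_graph_edge_iff[OF orients] RR(1) by blast
  moreover have "e = {label x, label y}" using RR(2) xy region_label_sign_cell by simp
  ultimately show "e \<in> snd (path_product (region_graph A0) (card A1))"
    using label_edge_in_path_product xy(1,2) by blast
qed

lemma vertical_edge:
  assumes R: "R \<in> regions A0" and i: "i < card A1"
  shows "{(R, i), (R, i + 1)} \<in> lifted_edges"
proof -
  obtain x where x: "x \<notin> \<Union>A0" "R = sign_cell n A0 x"
    using R regions_eq_sign_cells[OF orients_A0] by auto
  obtain s where s: "s \<notin> crossing x ` A1" "card (below (x + s *\<^sub>R v)) = i"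
    using level_exists[OF x(1) less_imp_le[OF i]] .
  have "i + 1 \<le> card A1" using i by simp
  then obtain t where t: "t \<notin> crossing x ` A1" "card (below (x + t *\<^sub>R v)) = i + 1"
    by (rule level_exists[OF x(1)])
  have "\<not> t \<le> s"
  proof
    assume "t \<le> s"
    then have "below (x + t *\<^sub>R v) \<subseteq> below (x + s *\<^sub>R v)" unfolding below_shift by auto
    then have "i + 1 \<le> i" using card_mono[OF finite_below] s(2) t(2) by metis
    then show False by simp
  qed
  then have sub: "below (x + s *\<^sub>R v) \<subseteq> below (x + t *\<^sub>R v)" unfolding below_shift by auto
  have "separating n A1 (x + s *\<^sub>R v) (x + t *\<^sub>R v) = below (x + t *\<^sub>R v) - below (x + s *\<^sub>R v)"
    using sub unfolding separating_def below_def by blast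
  then have "card (separating n A1 (x + s *\<^sub>R v) (x + t *\<^sub>R v)) = 1"
    using sub s(2) t(2) by (simp add: card_Diff_subset finite_below)
  moreover have "separating n A0 (x + s *\<^sub>R v) (x + t *\<^sub>R v) = {}"
    unfolding separating_A0_shift by (simp add: separating_def)
  ultimately have "card (separating n A (x + s *\<^sub>R v) (x + t *\<^sub>R v)) = 1"
    using card_separating_A by simp
  then have "{label (x + s *\<^sub>R v), label (x + t *\<^sub>R v)} \<in> lifted_edges"
    using label_edge_in_lifted_edges shift_notin_Union x(1) s(1) t(1) by blast
  then show ?thesis unfolding label_def sign_cell_A0_shift s(2) t(2) x(2) .
qed

lemma boundary_edge:
  assumes edge: "{R, R'} \<in> snd (region_graph A0)" and k: "k = 0 \<or> k = card A1"
  shows "{(R, k), (R', k)} \<in> lifted_edges"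
proof -
  have "R \<in> regions A0" "R' \<in> regions A0" using region_graph_edge_subset[OF edge] by auto
  then obtain x x' where x: "x \<notin> \<Union>A0" "R = sign_cell n A0 x" "x' \<notin> \<Union>A0" "R' = sign_cell n A0 x'"
    using regions_eq_sign_cells[OF orients_A0] by auto
  have sep0: "card (separating n A0 x x') = 1"
    using region_graph_edge_iff[OF orients_A0 x(1,3)] edge x(2,4) by simp
  have "k \<le> card A1" using k by auto
  then obtain t t' where t: "t \<notin> crossing x ` A1" "card (below (x + t *\<^sub>R v)) = k"
    and t': "t' \<notin> crossing x' ` A1" "card (below (x' + t' *\<^sub>R v)) = k"
    using level_exists x(1,3) by metis
  have "below (x + t *\<^sub>R v) = below (x' + t' *\<^sub>R v)"
  proof (cases "k = 0")
    case True
    then show ?thesis using t(2) t'(2) finite_below by simp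
  next
    case False
    then have "below (x + t *\<^sub>R v) = A1" "below (x' + t' *\<^sub>R v) = A1"
      using k t(2) t'(2) below_subset finite_A1 card_subset_eq by metis+
    then show ?thesis by simp
  qed
  then have "separating n A1 (x + t *\<^sub>R v) (x' + t' *\<^sub>R v) = {}"
    by (simp add: separating_A1_empty_iff)
  then have "card (separating n A (x + t *\<^sub>R v) (x' + t' *\<^sub>R v)) = 1"
    using card_separating_A sep0 by (simp add: separating_A0_shift)
  then have "{label (x + t *\<^sub>R v), label (x' + t' *\<^sub>R v)} \<in> lifted_edges"
    using label_edge_in_lifted_edges shift_notin_Union x(1,3) t(1) t'(1) by blast
  then show ?thesis unfolding label_def sign_cell_A0_shift t(2) t'(2) x(2,4) .
qed

theorem suspended_region_graph:
  "\<exists>G. suspended G (card A1) (region_graph A0) \<and> graph_iso (region_graph A) G"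
proof (intro exI conjI)
  let ?G = "(region_label ` regions A, lifted_edges)"
  have V: "fst (region_graph A) = regions A" by (simp add: region_graph_def)
  show "graph_iso (region_graph A) ?G"
    unfolding lifted_edges_def
    using graph_iso_image[of region_label "region_graph A", unfolded V]
      inj_on_region_label region_graph_edge_subset by blast
  show "suspended ?G (card A1) (region_graph A0)"
    unfolding suspended_def
  proof (intro conjI ballI allI impI)
    show "fst ?G = fst (path_product (region_graph A0) (card A1))"
      using region_label_image by (simp add: path_product_def region_graph_def)
    show "snd ?G \<subseteq> snd (path_product (region_graph A0) (card A1))"
      using lifted_edges_subset by simp
    fix R i assume "R \<in> fst (region_graph A0)" "i < card A1"
    then show "{(R, i), (R, i + 1)} \<in> snd ?G" using vertical_edge by (simp add: region_graph_def)
  next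
    fix R R' assume "{R, R'} \<in> snd (region_graph A0)"
    then show "{(R, 0), (R', 0)} \<in> snd ?G" "{(R, card A1), (R', card A1)} \<in> snd ?G"
      using boundary_edge by auto
  qed
qed

end

section \<open>Existence of a transversal direction\<close>

lemma normals_mono: "B \<subseteq> C \<Longrightarrow> normals B \<subseteq> normals C"
  unfolding normals_def by blast

lemma normal_in_span_if_Int_subset:
  assumes n: "orients n A" and HA: "H \<in> A" "H1 \<in> A" "H2 \<in> A" and "H \<noteq> H1"
    and H: "H2 \<inter> H1 \<subseteq> H" and span: "n H \<in> span S" "n H1 \<in> span S"
  shows "n H2 \<in> span S"
proof -
  have "(\<Inter>b\<in>{n H2, n H1}. {x. b \<bullet> x = 0}) \<subseteq> {x. n H \<bullet> x = 0}"
    using H orients_mem_iff[OF n HA(1)] orients_mem_iff[OF n HA(2)] orients_mem_iff[OF n HA(3)]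
    by auto
  then have "n H \<in> span (insert (n H2) {n H1})" by (rule in_span_if_hyperplanes_Int_subset)
  moreover have "n H \<notin> span {n H1}"
    using orients_eq_if_normal_in_span[OF n HA(1,2)] \<open>H \<noteq> H1\<close> by blast
  ultimately have "n H2 \<in> span (insert (n H) {n H1})" by (rule in_span_insert)
  moreover have "span (insert (n H) {n H1}) \<subseteq> span S"
    using span by (intro span_minimal subspace_span) auto
  ultimately show ?thesis by blast
qed

lemma normal_not_in_span_if_rank_drops:
  fixes A A0 A1 :: "'a::euclidean_space set set"
  assumes n: "orients n A" and A_eq: "A = A0 \<union> A1" and disjoint: "A0 \<inter> A1 = {}"
    and modular: "\<forall>H1\<in>A1. \<forall>H2\<in>A1. H1 \<noteq> H2 \<longrightarrow> (\<exists>H\<in>A0. H1 \<inter> H2 \<subseteq> H)"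
    and rank: "arr_rank A0 < arr_rank A" and H1: "H1 \<in> A1"
  shows "n H1 \<notin> span (normals A0)"
proof
  let ?S = "span (normals A0)"
  assume H1_span: "n H1 \<in> ?S"
  have n0: "orients n A0" using n A_eq orients_subset by blast
  have A1_span: "n H2 \<in> ?S" if H2: "H2 \<in> A1" for H2
  proof (cases "H2 = H1")
    case True
    then show ?thesis using H1_span by simp
  next
    case False
    then obtain H where H: "H \<in> A0" "H2 \<inter> H1 \<subseteq> H" using modular H1 H2 by blast
    have "H \<noteq> H1" using H(1) H1 disjoint by blast
    moreover have "H \<in> A" "H1 \<in> A" "H2 \<in> A" using H(1) H1 H2 A_eq by auto
    ultimately show ?thesis
      using normal_in_span_if_Int_subset[OF n _ _ _ _ H(2)] H1_span
        span_base[OF orients_normal_in_normals[OF n0 H(1)]] by blast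
  qed
  have "normals A \<subseteq> ?S"
  proof (rule normals_subset_span[OF n])
    fix H assume "H \<in> A"
    then show "n H \<in> ?S"
      using A1_span span_base[OF orients_normal_in_normals[OF n0]] A_eq by blast
  qed
  then have "span (normals A) = ?S"
    using span_minimal[OF _ subspace_span] span_mono[OF normals_mono[of A0 A]] A_eq by blast
  then show False using rank unfolding arr_rank_def by simp
qed

lemma orients_flip:
  assumes n: "orients n B"
  shows "orients (\<lambda>H. if P H then - n H else n H) B"
  unfolding orients_def
proof
  fix H assume H: "H \<in> B"
  have "(if P H then - n H else n H) \<noteq> 0" using orients_normal_nonzero[OF n H] by simp
  moreover have "H = {x. (if P H then - n H else n H) \<bullet> x = 0}"
  proof -
    have "{x. (if P H then - n H else n H) \<bullet> x = 0} = {x. n H \<bullet> x = 0}" by auto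
    with orients_hyperplane_eq[OF n H] show ?thesis by (rule trans[OF _ sym])
  qed
  ultimately show "(if P H then - n H else n H) \<noteq> 0 \<and> H = {x. (if P H then - n H else n H) \<bullet> x = 0}" ..
qed

lemma transversal_split_exists:
  fixes A A0 A1 :: "'a::euclidean_space set set"
  assumes arr: "arrangement A" and A_eq: "A = A0 \<union> A1" and disjoint: "A0 \<inter> A1 = {}"
    and modular: "\<forall>H1\<in>A1. \<forall>H2\<in>A1. H1 \<noteq> H2 \<longrightarrow> (\<exists>H\<in>A0. H1 \<inter> H2 \<subseteq> H)"
    and rank: "arr_rank A0 < arr_rank A"
  obtains n v where "transversal_split A A0 A1 n v"
proof -
  obtain n0 where n0: "orients n0 A" using arrangement_orients[OF arr] by blast
  have finite_A: "finite A" using arr unfolding arrangement_def by blast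
  have "\<forall>H\<in>A1. \<exists>w. (\<forall>b\<in>normals A0. b \<bullet> w = 0) \<and> n0 H \<bullet> w \<noteq> 0"
  proof
    fix H assume "H \<in> A1"
    then have "n0 H \<notin> span (normals A0)"
      by (rule normal_not_in_span_if_rank_drops[OF n0 A_eq disjoint modular rank])
    then show "\<exists>w. (\<forall>b\<in>normals A0. b \<bullet> w = 0) \<and> n0 H \<bullet> w \<noteq> 0"
      using in_span_if_hyperplanes_Int_subset[of "normals A0" "n0 H"] by blast
  qed
  moreover have "finite A1" using finite_A A_eq by simp
  ultimately obtain v where v: "\<forall>b\<in>normals A0. b \<bullet> v = 0" "\<forall>H\<in>A1. n0 H \<bullet> v \<noteq> 0"
    using exists_orthogonal_avoiding by blast
  define n where "n H = (if n0 H \<bullet> v < 0 then - n0 H else n0 H)" for H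
  show thesis
  proof (rule that, unfold_locales)
    show "finite A" "A = A0 \<union> A1" "A0 \<inter> A1 = {}" by fact+
    show "orients n A" unfolding n_def using n0 by (rule orients_flip)
    show "n H \<bullet> v = 0" if "H \<in> A0" for H
      using v(1) orients_normal_in_normals[OF orients_subset[OF n0] that] A_eq unfolding n_def by auto
    show "0 < n H \<bullet> v" if "H \<in> A1" for H
      using v(2) that unfolding n_def by auto
    show "\<exists>H\<in>A0. H1 \<inter> H2 \<subseteq> H" if "H1 \<in> A1" "H2 \<in> A1" "H1 \<noteq> H2" for H1 H2
      using modular that by blast
  qed
qed

theorem lemma3p1:
  fixes A A0 A1 :: "'a::euclidean_space set set"
  assumes "arrangement A"
    and "arr_rank A \<ge> 3"
    and "A = A0 \<union> A1" and "A0 \<inter> A1 = {}"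
    and "A0 \<noteq> {}" and "A1 \<noteq> {}"
    and "supersolvable A0" and "arr_rank A0 = arr_rank A - 1"
    and "\<forall>H1\<in>A1. \<forall>H2\<in>A1. H1 \<noteq> H2 \<longrightarrow> (\<exists>H\<in>A0. H1 \<inter> H2 \<subseteq> H)"
  shows "\<exists>G. suspended G (card A1) (region_graph A0) \<and> graph_iso (region_graph A) G"
proof -
  have "arr_rank A0 < arr_rank A" using assms(2,8) by simp
  then obtain n v where "transversal_split A A0 A1 n v"
    using transversal_split_exists[OF assms(1,3,4,9)] by blast
  then show ?thesis by (rule transversal_split.suspended_region_graph)
qed

end
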